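(* For any formal power series $\tau({\bf t})$ in ${\bf t}=(t_1,t_2,\dots)$ and any $n\ge1$, \[ W_n(x_1,\dots,x_n)=[\epsilon_1\cdots\epsilon_n]\Big(K_n(x_1,\dots,x_n;x_1-\epsilon_1,\dots,x_n-\epsilon_n)\Big/\det\Big(\frac1{x_i-x_j+\epsilon_j}\Big)_{i,j}\Big), \] where $[\epsilon_1\cdots\epsilon_n]$ denotes extraction of the coefficient of $\epsilon_1\cdots\epsilon_n$.
   Context: $[x]=(x,x^2/2,x^3/3,\dots)$ and $\tau(\sum_i[x_i]-\sum_i[x'_i])$ means substituting $t_l=\sum_i(x_i^l-x_i'^l)/l$. $K_n(x_1,\dots,x_n;x'_1,\dots,x'_n)=\det\big(\frac1{x_i-x'_j}\big)_{i,j}\,\tau\big(\sum_i([x_i]-[x'_i])\big)$. $\nabla(x)=\sum_{i\ge1}x^{i-1}\partial/\partial t_i$ and $W_n(x_1,\dots,x_n)=\prod_{i=1}^n\nabla(x_i)\tau({\bf t})|_{{\bf t}=0}$. *)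

theory Defs
  imports Main "HOL-Library.Poly_Mapping" "HOL-Library.Groups_Big_Fun"
begin

text \<open>
  A formal power series tau(t) in t = (t_1, t_2, ...) is represented by its coefficient
  function on monomials: a monomial t^a is a finitely supported exponent vector
  a :: nat =>0 nat, lookup a l being the exponent of t_l.  (Index 0 plays no role:
  both sides below only see t_0 = 0.)
\<close>
type_synonym 'a tseries = "(nat \<Rightarrow>\<^sub>0 nat) \<Rightarrow> 'a"

definition tderiv :: "nat \<Rightarrow> 'a::comm_semiring_1 tseries \<Rightarrow> 'a tseries" where
  "tderiv k tau = (\<lambda>a. of_nat (Poly_Mapping.lookup a k + 1) * tau (a + Poly_Mapping.single k 1))"

text \<open>
  W_n(x_1,...,x_n) = prod_i nabla(x_i) tau(t) at t = 0, with nabla(x) = sum_{i>=1} x^(i-1) d/dt_i,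
  as a formal power series in x_0,...,x_{n-1} (0-based), given by its coefficient function
  on monomials m :: nat =>0 nat in the x-variables.  The coefficient of
  x_0^(m_0) ... x_(n-1)^(m_(n-1)) is d/dt_(m_0+1) ... d/dt_(m_(n-1)+1) tau at t = 0.
\<close>
definition W :: "nat \<Rightarrow> 'a::comm_semiring_1 tseries \<Rightarrow> (nat \<Rightarrow>\<^sub>0 nat) \<Rightarrow> 'a" where
  "W n tau m =
     (if Poly_Mapping.keys m \<subseteq> {..<n}
      then foldr (\<lambda>i s. tderiv (Poly_Mapping.lookup m i + 1) s) [0..<n] tau 0
      else 0)"

text \<open>
  Polynomials (with coefficients in 'a) in the variables x_i = Inl i and eps_i = Inr i.
\<close>
type_synonym 'a xepoly = "((nat + nat) \<Rightarrow>\<^sub>0 nat) \<Rightarrow>\<^sub>0 'a"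

definition xvar :: "nat \<Rightarrow> 'a::comm_semiring_1 xepoly" where
  "xvar i = Poly_Mapping.single (Poly_Mapping.single (Inl i) 1) 1"

definition evar :: "nat \<Rightarrow> 'a::comm_semiring_1 xepoly" where
  "evar i = Poly_Mapping.single (Poly_Mapping.single (Inr i) 1) 1"

definition pconst :: "'a::comm_semiring_1 \<Rightarrow> 'a xepoly" where
  "pconst c = Poly_Mapping.single 0 c"

text \<open>
  The substituted value of t_l in tau(sum_i [x_i] - sum_i [x'_i]) with x'_i = x_i - eps_i:
  t_l = sum_i (x_i^l - x'_i^l) / l.  (For l = 0 this is 0.)
\<close>
definition tsub :: "nat \<Rightarrow> nat \<Rightarrow> 'a::field_char_0 xepoly" where
  "tsub n l = (\<Sum>i<n. (xvar i ^ l - (xvar i - evar i) ^ l) * pconst (1 / of_nat l))"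

text \<open>
  tau(sum_i ([x_i] - [x_i - eps_i])) as a formal power series in x and eps, given by its
  coefficient function: coefficient of the monomial mu is the (formal, finitely supported)
  sum over all monomials t^a of tau_a times the mu-coefficient of prod_l (t_l substituted)^(a_l).
\<close>
definition tau_subst :: "nat \<Rightarrow> 'a::field_char_0 tseries \<Rightarrow> ((nat + nat) \<Rightarrow>\<^sub>0 nat) \<Rightarrow> 'a" where
  "tau_subst n tau mu =
     Sum_any (\<lambda>a. tau a * Poly_Mapping.lookup (\<Prod>l\<in>Poly_Mapping.keys a. tsub n l ^ Poly_Mapping.lookup a l) mu)"

definition xeps_monom :: "nat \<Rightarrow> (nat \<Rightarrow>\<^sub>0 nat) \<Rightarrow> ((nat + nat) \<Rightarrow>\<^sub>0 nat)" where
  "xeps_monom n m =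
     (\<Sum>i\<in>Poly_Mapping.keys m. Poly_Mapping.single (Inl i) (Poly_Mapping.lookup m i)) + (\<Sum>i<n. Poly_Mapping.single (Inr i) 1)"

text \<open>
  Note K_n(x; x - eps) / det(1/(x_i - x_j + eps_j)) = tau(sum_i ([x_i] - [x_i - eps_i]))
  by the very definition of K_n.
\<close>
definition eps_coeff_tau_subst :: "nat \<Rightarrow> 'a::field_char_0 tseries \<Rightarrow> (nat \<Rightarrow>\<^sub>0 nat) \<Rightarrow> 'a" where
  "eps_coeff_tau_subst n tau m = tau_subst n tau (xeps_monom n m)"

end

theory Submission
  imports Defs
begin

text \<open>
  Induction on n, removing the last pair of variables (x_n, eps_n).  Since
  (x^l - (x - eps)^l) / l = eps x^(l-1) + O(eps^2), the substitution for n+1 pairs is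
  t_l = t'_l + eps_n x_n^(l-1) + O(eps_n^2), where the substitution t' for the first n pairs
  involves neither x_n nor eps_n.  Expanding tau to first order in eps_n, the coefficient of
  eps_n x_n^j in tau(t) is therefore the coefficient of (d/dt_(j+1) tau)(t').  So the right-hand
  side satisfies the same recursion as W_n = nabla(x_1) ... nabla(x_n) tau at t = 0, namely
  F_(n+1)(tau)[x^m] = F_n(d/dt_(m_n + 1) tau)[x^m without x_n], and both sides are tau(0) at the
  constant monomial and 0 elsewhere when n = 0.
\<close>

definition vars :: "(('v \<Rightarrow>\<^sub>0 nat) \<Rightarrow>\<^sub>0 'a::zero) \<Rightarrow> 'v set" where
  "vars p = (\<Union>m\<in>Poly_Mapping.keys p. Poly_Mapping.keys m)"

lemma vars_add_subset:
  fixes p q :: "('v \<Rightarrow>\<^sub>0 nat) \<Rightarrow>\<^sub>0 'a::monoid_add"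
  shows "vars p \<subseteq> V \<Longrightarrow> vars q \<subseteq> V \<Longrightarrow> vars (p + q) \<subseteq> V"
  using keys_add[of p q] unfolding vars_def by blast

lemma vars_diff_subset:
  fixes p q :: "('v \<Rightarrow>\<^sub>0 nat) \<Rightarrow>\<^sub>0 'a::ab_group_add"
  shows "vars p \<subseteq> V \<Longrightarrow> vars q \<subseteq> V \<Longrightarrow> vars (p - q) \<subseteq> V"
  using keys_diff[of p q] unfolding vars_def by blast

lemma vars_mult_subset:
  fixes p q :: "('v \<Rightarrow>\<^sub>0 nat) \<Rightarrow>\<^sub>0 'a::semiring_0"
  assumes "vars p \<subseteq> V" "vars q \<subseteq> V"
  shows "vars (p * q) \<subseteq> V"
proof
  fix x assume "x \<in> vars (p * q)"
  then obtain m where "m \<in> Poly_Mapping.keys (p * q)" "x \<in> Poly_Mapping.keys m"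
    by (auto simp: vars_def)
  then obtain m1 m2 where "m = m1 + m2" "m1 \<in> Poly_Mapping.keys p" "m2 \<in> Poly_Mapping.keys q"
    using keys_mult by blast
  with \<open>x \<in> Poly_Mapping.keys m\<close> show "x \<in> V"
    using keys_add[of m1 m2] assms unfolding vars_def by blast
qed

lemma vars_single: "vars (Poly_Mapping.single m c) \<subseteq> Poly_Mapping.keys m"
  by (simp add: vars_def)

lemma vars_one [simp]: "vars (1 :: ('v \<Rightarrow>\<^sub>0 nat) \<Rightarrow>\<^sub>0 'a::semiring_1) = {}"
  by (simp add: vars_def)

lemma vars_power_subset:
  fixes p :: "('v \<Rightarrow>\<^sub>0 nat) \<Rightarrow>\<^sub>0 'a::semiring_1"
  shows "vars p \<subseteq> V \<Longrightarrow> vars (p ^ k) \<subseteq> V"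
  by (induction k) (simp_all add: vars_mult_subset)

lemma vars_sum_subset:
  fixes f :: "'b \<Rightarrow> ('v \<Rightarrow>\<^sub>0 nat) \<Rightarrow>\<^sub>0 'a::comm_monoid_add"
  shows "(\<And>l. l \<in> K \<Longrightarrow> vars (f l) \<subseteq> V) \<Longrightarrow> vars (\<Sum>l\<in>K. f l) \<subseteq> V"
proof (induction K rule: infinite_finite_induct)
  case (insert l K)
  then show ?case by (simp add: vars_add_subset)
qed (simp_all add: vars_def)

lemma vars_prod_subset:
  fixes f :: "'b \<Rightarrow> ('v \<Rightarrow>\<^sub>0 nat) \<Rightarrow>\<^sub>0 'a::comm_semiring_1"
  shows "(\<And>l. l \<in> K \<Longrightarrow> vars (f l) \<subseteq> V) \<Longrightarrow> vars (\<Prod>l\<in>K. f l) \<subseteq> V"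
  by (induction K rule: infinite_finite_induct) (simp_all add: vars_mult_subset)

lemma lookup_eq_zero_if_var_notin_vars:
  "x \<in> Poly_Mapping.keys m \<Longrightarrow> x \<notin> vars p \<Longrightarrow> Poly_Mapping.lookup p m = 0"
  unfolding vars_def by (meson UN_I in_keys_iff)

lemma lookup_single_mult:
  fixes q :: "('v \<Rightarrow>\<^sub>0 nat) \<Rightarrow>\<^sub>0 'a::comm_semiring_1"
  shows "Poly_Mapping.lookup (Poly_Mapping.single s c * q) m =
    c * (\<Sum>m'. Poly_Mapping.lookup q m' when m = s + m')"
  by (simp add: lookup_mult lookup_single when_mult)

lemma lookup_single_mult_eq_zero:
  fixes q :: "('v \<Rightarrow>\<^sub>0 nat) \<Rightarrow>\<^sub>0 'a::comm_semiring_1"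
  assumes "Poly_Mapping.lookup m x < Poly_Mapping.lookup s x"
  shows "Poly_Mapping.lookup (Poly_Mapping.single s c * q) m = 0"
proof -
  have "m \<noteq> s + m'" for m'
    using assms by (auto simp: lookup_add)
  then show ?thesis by (simp add: lookup_single_mult)
qed

lemma lookup_single_mult_separated:
  fixes q :: "('v \<Rightarrow>\<^sub>0 nat) \<Rightarrow>\<^sub>0 'a::comm_semiring_1"
  assumes "Poly_Mapping.keys s \<union> Poly_Mapping.keys s' \<subseteq> V"
    and "Poly_Mapping.keys m \<inter> V = {}" and "vars q \<inter> V = {}"
  shows "Poly_Mapping.lookup (Poly_Mapping.single s c * q) (s' + m) =
    (if s = s' then c * Poly_Mapping.lookup q m else 0)"
proof -
  have sum_eq_iff: "s' + m = s + m' \<longleftrightarrow> s = s' \<and> m' = m"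
    if "Poly_Mapping.keys m' \<inter> V = {}" for m'
  proof
    assume eq: "s' + m = s + m'"
    have "Poly_Mapping.lookup s x = Poly_Mapping.lookup s' x \<and>
        Poly_Mapping.lookup m' x = Poly_Mapping.lookup m x" for x
    proof (cases "x \<in> V")
      case True
      then have "Poly_Mapping.lookup m x = 0" "Poly_Mapping.lookup m' x = 0"
        using assms(2) that by (auto simp: in_keys_iff)
      then show ?thesis using arg_cong[OF eq, of "\<lambda>f. Poly_Mapping.lookup f x"]
        by (simp add: lookup_add)
    next
      case False
      then have "Poly_Mapping.lookup s x = 0" "Poly_Mapping.lookup s' x = 0"
        using assms(1) by (auto simp: in_keys_iff)
      then show ?thesis using arg_cong[OF eq, of "\<lambda>f. Poly_Mapping.lookup f x"]
        by (simp add: lookup_add)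
    qed
    then show "s = s' \<and> m' = m" by (simp add: poly_mapping_eqI)
  qed simp
  have "(Poly_Mapping.lookup q m' when s' + m = s + m') =
      (Poly_Mapping.lookup q m' when s = s' \<and> m' = m)" for m'
  proof (cases "Poly_Mapping.lookup q m' = 0")
    case False
    then have "Poly_Mapping.keys m' \<inter> V = {}"
      using assms(3) unfolding vars_def by (auto simp flip: in_keys_iff)
    then show ?thesis by (simp add: sum_eq_iff)
  qed simp
  then show ?thesis
    by (simp add: lookup_single_mult when_def)
qed

lemma lookup_of_nat_mult:
  fixes p :: "('v \<Rightarrow>\<^sub>0 nat) \<Rightarrow>\<^sub>0 'a::comm_semiring_1"
  shows "Poly_Mapping.lookup (of_nat c * p) m = of_nat c * Poly_Mapping.lookup p m"
  unfolding of_nat_single[unfolded comp_def] lookup_single_mult by (simp add: when_def)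

section \<open>First-order expansions\<close>

lemma power_first_order:
  fixes u e v :: "'a::comm_semiring_1"
  shows "\<exists>W. (u + e * v) ^ a = u ^ a + of_nat a * e * v * u ^ (a - 1) + e\<^sup>2 * W"
proof (induction a)
  case 0
  show ?case by (intro exI[of _ 0]) simp
next
  case (Suc a)
  then obtain W where W: "(u + e * v) ^ a = u ^ a + of_nat a * e * v * u ^ (a - 1) + e\<^sup>2 * W"
    by blast
  show ?case
  proof (cases a)
    case 0
    then show ?thesis by (intro exI[of _ 0]) simp
  next
    case (Suc b)
    have "(u + e * v) ^ Suc a = (u + e * v) * (u ^ a + of_nat a * e * v * u ^ (a - 1) + e\<^sup>2 * W)"
      by (simp add: W)
    also have "\<dots> = u ^ Suc a + of_nat (Suc a) * e * v * u ^ (Suc a - 1)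
        + e\<^sup>2 * (u * W + of_nat a * v * v * u ^ (a - 1) + e * v * W)"
      using Suc by (simp add: algebra_simps power2_eq_square)
    finally show ?thesis by blast
  qed
qed

lemma prod_power_first_order:
  fixes u v :: "'b \<Rightarrow> 'a::comm_semiring_1" and e :: 'a
  assumes "finite K"
  shows "\<exists>W. (\<Prod>l\<in>K. (u l + e * v l) ^ a l) = (\<Prod>l\<in>K. u l ^ a l)
    + e * (\<Sum>k\<in>K. of_nat (a k) * v k * u k ^ (a k - 1) * (\<Prod>l\<in>K - {k}. u l ^ a l)) + e\<^sup>2 * W"
  using assms
proof (induction K rule: finite_induct)
  case empty
  show ?case by (intro exI[of _ 0]) simp
next
  case (insert k K)
  define P where "P = (\<Prod>l\<in>K. u l ^ a l)"
  define S where "S = (\<Sum>j\<in>K. of_nat (a j) * v j * u j ^ (a j - 1) * (\<Prod>l\<in>K - {j}. u l ^ a l))"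
  define A where "A = u k ^ a k"
  define B where "B = of_nat (a k) * v k * u k ^ (a k - 1)"
  obtain W where W: "(\<Prod>l\<in>K. (u l + e * v l) ^ a l) = P + e * S + e\<^sup>2 * W"
    using insert.IH unfolding P_def S_def by blast
  obtain V where V: "(u k + e * v k) ^ a k = A + e * B + e\<^sup>2 * V"
  proof -
    have "of_nat (a k) * e * v k * u k ^ (a k - 1) = e * B"
      by (simp add: B_def ac_simps)
    then show thesis
      using that power_first_order[of "u k" e "v k" "a k"] unfolding A_def by auto
  qed
  have "(\<Prod>l\<in>insert k K - {j}. u l ^ a l) = A * (\<Prod>l\<in>K - {j}. u l ^ a l)" if "j \<in> K" for j
  proof -
    have "insert k K - {j} = insert k (K - {j})" using that insert.hyps by auto
    then show ?thesis using insert.hyps by (simp add: A_def)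
  qed
  then have "(\<Sum>j\<in>K. of_nat (a j) * v j * u j ^ (a j - 1) * (\<Prod>l\<in>insert k K - {j}. u l ^ a l))
      = A * S"
    unfolding S_def sum_distrib_left by (intro sum.cong) (simp_all add: ac_simps)
  moreover have "(\<Prod>l\<in>insert k K - {k}. u l ^ a l) = P"
    using insert.hyps by (simp add: P_def)
  ultimately have sum_insert: "B * P + A * S
      = (\<Sum>j\<in>insert k K. of_nat (a j) * v j * u j ^ (a j - 1) * (\<Prod>l\<in>insert k K - {j}. u l ^ a l))"
    using insert.hyps by (simp add: B_def)
  have "(\<Prod>l\<in>insert k K. (u l + e * v l) ^ a l) = (A + e * B + e\<^sup>2 * V) * (P + e * S + e\<^sup>2 * W)"
    by (simp only: prod.insert[OF insert.hyps] V W)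
  also have "\<dots> = A * P + e * (B * P + A * S)
      + e\<^sup>2 * (A * W + B * S + e * B * W + V * P + e * V * S + e\<^sup>2 * V * W)"
    by (simp add: algebra_simps power2_eq_square)
  also have "A * P = (\<Prod>l\<in>insert k K. u l ^ a l)"
    using insert.hyps by (simp add: A_def P_def)
  finally show ?case unfolding sum_insert by blast
qed

definition eval_monomial :: "('b \<Rightarrow>\<^sub>0 nat) \<Rightarrow> ('b \<Rightarrow> 'a::comm_monoid_mult) \<Rightarrow> 'a" where
  "eval_monomial a f = (\<Prod>l\<in>Poly_Mapping.keys a. f l ^ Poly_Mapping.lookup a l)"

lemma eval_monomial_superset:
  assumes "finite K" "Poly_Mapping.keys a \<subseteq> K"
  shows "eval_monomial a f = (\<Prod>l\<in>K. f l ^ Poly_Mapping.lookup a l)"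
  unfolding eval_monomial_def using assms
  by (intro prod.mono_neutral_left) (auto simp: in_keys_iff)

lemma eval_monomial_diff_single:
  assumes "finite K" "Poly_Mapping.keys a \<subseteq> K" "k \<in> K"
  shows "eval_monomial (a - Poly_Mapping.single k 1) f
    = f k ^ (Poly_Mapping.lookup a k - 1) * (\<Prod>l\<in>K - {k}. f l ^ Poly_Mapping.lookup a l)"
proof -
  have "Poly_Mapping.keys (a - Poly_Mapping.single k 1) \<subseteq> K"
    using assms(2) by (auto simp: in_keys_iff lookup_minus)
  then have "eval_monomial (a - Poly_Mapping.single k 1) f
      = (\<Prod>l\<in>K. f l ^ Poly_Mapping.lookup (a - Poly_Mapping.single k 1) l)"
    by (rule eval_monomial_superset[OF assms(1)])
  also have "\<dots> = f k ^ (Poly_Mapping.lookup a k - 1)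
      * (\<Prod>l\<in>K - {k}. f l ^ Poly_Mapping.lookup (a - Poly_Mapping.single k 1) l)"
    using assms(1,3) by (simp add: prod.remove lookup_minus)
  also have "(\<Prod>l\<in>K - {k}. f l ^ Poly_Mapping.lookup (a - Poly_Mapping.single k 1) l)
      = (\<Prod>l\<in>K - {k}. f l ^ Poly_Mapping.lookup a l)"
    by (intro prod.cong) (auto simp: lookup_minus lookup_single)
  finally show ?thesis .
qed

lemma vars_eval_monomial_subset:
  fixes f :: "'b \<Rightarrow> ('v \<Rightarrow>\<^sub>0 nat) \<Rightarrow>\<^sub>0 'a::comm_semiring_1"
  shows "(\<And>l. vars (f l) \<subseteq> V) \<Longrightarrow> vars (eval_monomial a f) \<subseteq> V"
  unfolding eval_monomial_def by (intro vars_prod_subset vars_power_subset)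

lemma Sum_any_shift_single:
  fixes f :: "('b \<Rightarrow>\<^sub>0 nat) \<Rightarrow> 'a::comm_monoid_add"
  assumes "\<And>a. Poly_Mapping.lookup a k = 0 \<Longrightarrow> f a = 0"
  shows "Sum_any f = (\<Sum>b. f (b + Poly_Mapping.single k 1))"
proof -
  let ?g = "\<lambda>b. b + Poly_Mapping.single k (1::nat)"
  have "{a. f a \<noteq> 0} = ?g ` {b. f (?g b) \<noteq> 0}"
  proof (intro equalityI subsetI)
    fix a assume "a \<in> {a. f a \<noteq> 0}"
    then have "f a \<noteq> 0" "Poly_Mapping.lookup a k \<noteq> 0"
      using assms by auto
    moreover from this(2) have "a = ?g (a - Poly_Mapping.single k 1)"
      by (intro poly_mapping_eqI) (auto simp: lookup_add lookup_minus lookup_single when_def)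
    ultimately show "a \<in> ?g ` {b. f (?g b) \<noteq> 0}"
      by (metis (mono_tags, lifting) image_eqI mem_Collect_eq)
  qed auto
  moreover have "inj ?g"
    by (rule injI) simp
  ultimately show ?thesis
    unfolding Sum_any.expand_set by (simp add: sum.reindex inj_on_subset)
qed

section \<open>The substitution t_l = sum_i ([x_i] - [x_i - eps_i])_l\<close>

lemma tau_subst_eq_Sum_any:
  "tau_subst n tau mu = (\<Sum>a. tau a * Poly_Mapping.lookup (eval_monomial a (tsub n)) mu)"
  by (simp add: tau_subst_def eval_monomial_def)

lemma vars_tsub: "vars (tsub n l) \<subseteq> Inl ` {..<n} \<union> Inr ` {..<n}"
proof -
  let ?V = "Inl ` {..<n} \<union> Inr ` {..<n}"
  have "vars (xvar i :: 'a xepoly) \<subseteq> ?V" "vars (evar i :: 'a xepoly) \<subseteq> ?V" if "i < n" for i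
    using that vars_single by (fastforce simp: xvar_def evar_def)+
  moreover have "vars (pconst c :: 'a xepoly) \<subseteq> ?V" for c
    using vars_single by (fastforce simp: pconst_def)
  ultimately show ?thesis
    unfolding tsub_def
    by (intro vars_sum_subset vars_mult_subset vars_diff_subset vars_power_subset) auto
qed

definition tsub_eps_deriv :: "nat \<Rightarrow> nat \<Rightarrow> 'a::comm_semiring_1 xepoly" where
  "tsub_eps_deriv n l = (if l = 0 then 0 else xvar n ^ (l - 1))"

lemma tsub_Suc_first_order:
  fixes n l :: nat
  shows "\<exists>r :: 'a::field_char_0 xepoly.
    tsub (Suc n) l = tsub n l + evar n * (tsub_eps_deriv n l + evar n * r)"
proof -
  have tsub_Suc:
    "tsub (Suc n) l = tsub n l + (xvar n ^ l - (xvar n - evar n) ^ l) * pconst (1 / of_nat l)"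
    by (simp add: tsub_def)
  show ?thesis
  proof (cases "l = 0")
    case True
    then show ?thesis unfolding tsub_Suc by (intro exI[of _ 0]) (simp add: tsub_eps_deriv_def)
  next
    case False
    obtain W :: "'a xepoly" where "(xvar n + evar n * -1) ^ l
        = xvar n ^ l + of_nat l * evar n * -1 * xvar n ^ (l - 1) + (evar n)\<^sup>2 * W"
      using power_first_order by blast
    then have W: "(xvar n - evar n) ^ l
        = xvar n ^ l - of_nat l * evar n * xvar n ^ (l - 1) + (evar n)\<^sup>2 * W"
      by simp
    have "(xvar n ^ l - (xvar n - evar n) ^ l) * pconst (1 / of_nat l)
        = (of_nat l * pconst (1 / of_nat l)) * (evar n * xvar n ^ (l - 1))
          - (evar n)\<^sup>2 * W * pconst (1 / of_nat l)"
      by (simp add: W algebra_simps)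
    also have "of_nat l * pconst (1 / of_nat l) = (1 :: 'a xepoly)"
      using False by (simp add: pconst_def mult_single flip: single_of_nat)
    finally have "(xvar n ^ l - (xvar n - evar n) ^ l) * pconst (1 / of_nat l)
        = evar n * (xvar n ^ (l - 1) + evar n * (- W * pconst (1 / of_nat l)))"
      by (simp add: algebra_simps power2_eq_square)
    then show ?thesis
      using False
      by (intro exI[of _ "- W * pconst (1 / of_nat l)"]) (simp add: tsub_Suc tsub_eps_deriv_def)
  qed
qed

lemma lookup_xeps_monom_Inl:
  "Poly_Mapping.lookup (xeps_monom n m) (Inl i) = Poly_Mapping.lookup m i"
  by (simp add: xeps_monom_def lookup_add lookup_sum lookup_single when_def in_keys_iff)

lemma lookup_xeps_monom_Inr:
  "Poly_Mapping.lookup (xeps_monom n m) (Inr i) = (if i < n then 1 else 0)"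
  by (simp add: xeps_monom_def lookup_add lookup_sum lookup_single when_def)

lemma xeps_monom_Suc:
  "xeps_monom (Suc n) m
    = (Poly_Mapping.single (Inr n) 1 + Poly_Mapping.single (Inl n) (Poly_Mapping.lookup m n))
      + xeps_monom n (Poly_Mapping.update n 0 m)"
proof (rule poly_mapping_eqI)
  fix v :: "nat + nat"
  show "Poly_Mapping.lookup (xeps_monom (Suc n) m) v = Poly_Mapping.lookup
      (Poly_Mapping.single (Inr n) 1 + Poly_Mapping.single (Inl n) (Poly_Mapping.lookup m n)
        + xeps_monom n (Poly_Mapping.update n 0 m)) v"
    by (cases v) (auto simp: lookup_add lookup_single lookup_xeps_monom_Inl lookup_xeps_monom_Inr
        lookup_update when_def)
qed

lemma vars_eval_monomial_tsub:
  "vars (eval_monomial a (tsub n)) \<subseteq> Inl ` {..<n} \<union> Inr ` {..<n}"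
  by (intro vars_eval_monomial_subset vars_tsub)

lemma lookup_evar_sq_mult_xeps_monom_Suc:
  "Poly_Mapping.lookup ((evar n)\<^sup>2 * p) (xeps_monom (Suc n) m) = 0"
proof -
  have "(evar n)\<^sup>2 = (Poly_Mapping.single (Poly_Mapping.single (Inr n) 2) 1 :: 'a xepoly)"
    by (simp add: evar_def power2_eq_square mult_single numeral_2_eq_2 flip: single_add)
  then show ?thesis
    by (simp add: lookup_single_mult_eq_zero[where x = "Inr n"] lookup_xeps_monom_Inr)
qed

lemma lookup_evar_tsub_eps_deriv_mult_xeps_monom_Suc:
  fixes p :: "'a::comm_semiring_1 xepoly"
  assumes "Inl n \<notin> vars p" "Inr n \<notin> vars p"
  shows "Poly_Mapping.lookup (evar n * tsub_eps_deriv n l * p) (xeps_monom (Suc n) m)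
    = (if l = Poly_Mapping.lookup m n + 1
       then Poly_Mapping.lookup p (xeps_monom n (Poly_Mapping.update n 0 m)) else 0)"
proof (cases "l = 0")
  case True
  then show ?thesis by (simp add: tsub_eps_deriv_def)
next
  case False
  let ?s = "\<lambda>j. Poly_Mapping.single (Inr n) 1 + Poly_Mapping.single (Inl n) j"
  let ?mu' = "xeps_monom n (Poly_Mapping.update n 0 m)"
  have "xvar n ^ j = (Poly_Mapping.single (Poly_Mapping.single (Inl n) j) 1 :: 'a xepoly)" for j
    by (induction j) (simp_all add: xvar_def mult_single add.commute flip: single_add)
  then have monomial:
    "evar n * tsub_eps_deriv n l = (Poly_Mapping.single (?s (l - 1)) 1 :: 'a xepoly)"
    using False by (simp add: evar_def tsub_eps_deriv_def mult_single)
  have "Poly_Mapping.lookup (?s j) (Inl n) = j" for j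
    by (simp add: lookup_add lookup_single)
  then have s_eq_iff: "?s (l - 1) = ?s (Poly_Mapping.lookup m n) \<longleftrightarrow> l = Poly_Mapping.lookup m n + 1"
    using False by (metis add_diff_cancel_right' le_add_diff_inverse2 less_one not_less)
  have "Poly_Mapping.lookup (evar n * tsub_eps_deriv n l * p) (xeps_monom (Suc n) m)
      = Poly_Mapping.lookup (Poly_Mapping.single (?s (l - 1)) 1 * p)
          (?s (Poly_Mapping.lookup m n) + ?mu')"
    by (simp only: monomial xeps_monom_Suc)
  also have "\<dots> = (if ?s (l - 1) = ?s (Poly_Mapping.lookup m n)
      then 1 * Poly_Mapping.lookup p ?mu' else 0)"
  proof (rule lookup_single_mult_separated)
    show "Poly_Mapping.keys (?s (l - 1)) \<union> Poly_Mapping.keys (?s (Poly_Mapping.lookup m n))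
        \<subseteq> {Inl n, Inr n}"
      by (auto simp: in_keys_iff lookup_add lookup_single when_def split: if_splits)
    show "Poly_Mapping.keys ?mu' \<inter> {Inl n, Inr n} = {}"
      by (simp add: in_keys_iff lookup_xeps_monom_Inl lookup_xeps_monom_Inr lookup_update)
    show "vars p \<inter> {Inl n, Inr n} = {}"
      using assms by auto
  qed
  finally show ?thesis
    unfolding s_eq_iff by simp
qed

lemma eval_monomial_tsub_Suc_first_order:
  fixes a :: "nat \<Rightarrow>\<^sub>0 nat" and n :: nat
  assumes K: "finite K" "Poly_Mapping.keys a \<subseteq> K"
  shows "\<exists>W :: 'a::field_char_0 xepoly. eval_monomial a (tsub (Suc n)) = eval_monomial a (tsub n)
    + (\<Sum>l\<in>K. of_nat (Poly_Mapping.lookup a l)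
        * (evar n * tsub_eps_deriv n l * eval_monomial (a - Poly_Mapping.single l 1) (tsub n)))
    + (evar n)\<^sup>2 * W"
proof -
  let ?E = "evar n :: 'a xepoly"
  define Z where "Z l = (eval_monomial (a - Poly_Mapping.single l 1) (tsub n) :: 'a xepoly)" for l
  have "\<forall>l. \<exists>r. tsub (Suc n) l = tsub n l + ?E * (tsub_eps_deriv n l + ?E * r)"
    using tsub_Suc_first_order by blast
  then obtain r where r: "\<And>l. tsub (Suc n) l = tsub n l + ?E * (tsub_eps_deriv n l + ?E * r l)"
    by metis
  define v where "v l = tsub_eps_deriv n l + ?E * r l" for l
  obtain W where "(\<Prod>l\<in>K. (tsub n l + ?E * v l) ^ Poly_Mapping.lookup a l)
      = (\<Prod>l\<in>K. tsub n l ^ Poly_Mapping.lookup a l)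
        + ?E * (\<Sum>l\<in>K. of_nat (Poly_Mapping.lookup a l) * v l
          * tsub n l ^ (Poly_Mapping.lookup a l - 1)
          * (\<Prod>j\<in>K - {l}. tsub n j ^ Poly_Mapping.lookup a j))
        + ?E\<^sup>2 * W"
    using prod_power_first_order[OF K(1)] by blast
  moreover have "Z l = tsub n l ^ (Poly_Mapping.lookup a l - 1)
      * (\<Prod>j\<in>K - {l}. tsub n j ^ Poly_Mapping.lookup a j)" if "l \<in> K" for l
    unfolding Z_def by (rule eval_monomial_diff_single[OF K that])
  then have "(\<Sum>l\<in>K. of_nat (Poly_Mapping.lookup a l) * v l
          * tsub n l ^ (Poly_Mapping.lookup a l - 1)
          * (\<Prod>j\<in>K - {l}. tsub n j ^ Poly_Mapping.lookup a j))
      = (\<Sum>l\<in>K. of_nat (Poly_Mapping.lookup a l) * v l * Z l)"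
    by (intro sum.cong refl) (simp add: mult.assoc)
  ultimately have "eval_monomial a (tsub (Suc n)) = eval_monomial a (tsub n)
      + ?E * (\<Sum>l\<in>K. of_nat (Poly_Mapping.lookup a l) * v l * Z l) + ?E\<^sup>2 * W"
    using K by (simp add: eval_monomial_superset r flip: v_def)
  then have "eval_monomial a (tsub (Suc n)) = eval_monomial a (tsub n)
      + (\<Sum>l\<in>K. of_nat (Poly_Mapping.lookup a l) * (?E * tsub_eps_deriv n l * Z l))
      + ?E\<^sup>2 * (W + (\<Sum>l\<in>K. of_nat (Poly_Mapping.lookup a l) * r l * Z l))"
    by (simp add: v_def algebra_simps sum_distrib_left sum.distrib power2_eq_square)
  then show ?thesis
    unfolding Z_def by blast
qed

text \<open>
  Of the first-order expansion above, only the eps_n-linear term of the factor t_k survives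
  extraction of the coefficient of eps_n x_n^(k-1).
\<close>

lemma lookup_eval_monomial_tsub_Suc_xeps_monom_Suc:
  fixes a m :: "nat \<Rightarrow>\<^sub>0 nat" and n :: nat
  defines "k \<equiv> Poly_Mapping.lookup m n + 1"
  shows "Poly_Mapping.lookup (eval_monomial a (tsub (Suc n)) :: 'a::field_char_0 xepoly)
      (xeps_monom (Suc n) m)
    = of_nat (Poly_Mapping.lookup a k) * Poly_Mapping.lookup
        (eval_monomial (a - Poly_Mapping.single k 1) (tsub n))
        (xeps_monom n (Poly_Mapping.update n 0 m))"
proof -
  let ?mu = "xeps_monom (Suc n) m"
  let ?mu' = "xeps_monom n (Poly_Mapping.update n 0 m)"
  define K where "K = insert k (Poly_Mapping.keys a)"
  define Z where "Z l = (eval_monomial (a - Poly_Mapping.single l 1) (tsub n) :: 'a xepoly)" for l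
  have K: "finite K" "Poly_Mapping.keys a \<subseteq> K" "k \<in> K"
    by (auto simp: K_def)
  obtain W where "eval_monomial a (tsub (Suc n)) = eval_monomial a (tsub n)
      + (\<Sum>l\<in>K. of_nat (Poly_Mapping.lookup a l) * (evar n * tsub_eps_deriv n l * Z l))
      + (evar n)\<^sup>2 * W"
    unfolding Z_def using eval_monomial_tsub_Suc_first_order[OF K(1,2)] by blast
  moreover have "Poly_Mapping.lookup (eval_monomial a (tsub n) :: 'a xepoly) ?mu = 0"
  proof (rule lookup_eq_zero_if_var_notin_vars)
    show "Inr n \<in> Poly_Mapping.keys ?mu"
      by (simp add: in_keys_iff lookup_xeps_monom_Inr)
    show "Inr n \<notin> vars (eval_monomial a (tsub n) :: 'a xepoly)"
      using vars_eval_monomial_tsub by blast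
  qed
  moreover have "Poly_Mapping.lookup
        (of_nat (Poly_Mapping.lookup a l) * (evar n * tsub_eps_deriv n l * Z l)) ?mu
      = (if l = k then of_nat (Poly_Mapping.lookup a k) * Poly_Mapping.lookup (Z k) ?mu' else 0)"
    for l
    using vars_eval_monomial_tsub[of "a - Poly_Mapping.single l 1" n]
    by (subst lookup_of_nat_mult, subst lookup_evar_tsub_eps_deriv_mult_xeps_monom_Suc)
      (auto simp: Z_def k_def)
  ultimately show ?thesis
    using K unfolding Z_def[symmetric]
    by (simp add: lookup_add lookup_sum lookup_evar_sq_mult_xeps_monom_Suc)
qed

lemma eps_coeff_tau_subst_Suc:
  "eps_coeff_tau_subst (Suc n) tau m
    = eps_coeff_tau_subst n (tderiv (Poly_Mapping.lookup m n + 1) tau) (Poly_Mapping.update n 0 m)"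
proof -
  define k where "k = Poly_Mapping.lookup m n + 1"
  let ?c = "\<lambda>n a m. Poly_Mapping.lookup (eval_monomial a (tsub n)) (xeps_monom n m)"
  have "eps_coeff_tau_subst (Suc n) tau m
      = (\<Sum>a. tau a * of_nat (Poly_Mapping.lookup a k)
          * ?c n (a - Poly_Mapping.single k 1) (Poly_Mapping.update n 0 m))"
    by (simp add: eps_coeff_tau_subst_def tau_subst_eq_Sum_any
        lookup_eval_monomial_tsub_Suc_xeps_monom_Suc k_def mult.assoc)
  also have "\<dots> = (\<Sum>b. tau (b + Poly_Mapping.single k 1)
      * of_nat (Poly_Mapping.lookup (b + Poly_Mapping.single k 1) k)
      * ?c n (b + Poly_Mapping.single k 1 - Poly_Mapping.single k 1) (Poly_Mapping.update n 0 m))"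
    by (rule Sum_any_shift_single) simp
  also have "\<dots> = (\<Sum>b. tau (b + Poly_Mapping.single k 1) * of_nat (Poly_Mapping.lookup b k + 1)
      * ?c n b (Poly_Mapping.update n 0 m))"
    by (simp add: lookup_add)
  also have "\<dots> = eps_coeff_tau_subst n (tderiv k tau) (Poly_Mapping.update n 0 m)"
    by (simp add: eps_coeff_tau_subst_def tau_subst_eq_Sum_any tderiv_def ac_simps)
  finally show ?thesis by (simp add: k_def)
qed

lemma eps_coeff_tau_subst_0:
  "eps_coeff_tau_subst 0 tau m = (if m = 0 then tau 0 else 0)"
proof -
  have "eval_monomial a (tsub 0) = (if a = 0 then 1 else (0 :: 'a xepoly))" for a
  proof (cases "a = 0")
    case False
    then obtain l where "l \<in> Poly_Mapping.keys a"
      by fastforce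
    then have "(\<Prod>l\<in>Poly_Mapping.keys a. tsub 0 l ^ Poly_Mapping.lookup a l) = (0 :: 'a xepoly)"
      by (intro prod_zero) (auto simp: tsub_def in_keys_iff power_0_left intro!: bexI[of _ l])
    then show ?thesis
      using False by (simp add: eval_monomial_def)
  qed (simp add: eval_monomial_def)
  moreover have "xeps_monom 0 m = 0 \<longleftrightarrow> m = 0"
  proof
    assume "xeps_monom 0 m = 0"
    then show "m = 0"
      by (intro poly_mapping_eqI) (metis lookup_xeps_monom_Inl lookup_zero)
  qed (simp add: xeps_monom_def)
  ultimately have "tau a * Poly_Mapping.lookup (eval_monomial a (tsub 0)) (xeps_monom 0 m)
      = (if a = 0 then (if m = 0 then tau 0 else 0) else 0)" for a
    by (simp add: lookup_one when_def)
  then show ?thesis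
    by (simp add: eps_coeff_tau_subst_def tau_subst_eq_Sum_any)
qed

lemma W_0: "W 0 tau m = (if m = 0 then tau 0 else 0)"
  by (simp add: W_def)

lemma W_Suc:
  fixes tau :: "'a::comm_semiring_1 tseries"
  shows "W (Suc n) tau m
    = W n (tderiv (Poly_Mapping.lookup m n + 1) tau) (Poly_Mapping.update n 0 m)"
proof -
  have "Poly_Mapping.keys (Poly_Mapping.update n 0 m) \<subseteq> {..<n} \<longleftrightarrow> Poly_Mapping.keys m \<subseteq> {..<Suc n}"
    by (auto simp: keys_update)
  moreover have "foldr (\<lambda>i. tderiv (Poly_Mapping.lookup m i + 1)) [0..<n] tau'
      = foldr (\<lambda>i. tderiv (Poly_Mapping.lookup (Poly_Mapping.update n 0 m) i + 1)) [0..<n] tau'"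
    for tau' :: "'a tseries"
    by (rule foldr_cong) (auto simp: lookup_update)
  ultimately show ?thesis
    by (simp add: W_def)
qed

theorem proposition4p10:
  fixes tau :: "'a::field_char_0 tseries" and n :: nat
  assumes "n \<ge> 1"
  shows "W n tau = eps_coeff_tau_subst n tau"
proof -
  have "W n tau' m = eps_coeff_tau_subst n tau' m" for tau' :: "'a tseries" and m
    by (induction n arbitrary: tau' m)
      (simp_all add: W_0 eps_coeff_tau_subst_0 W_Suc eps_coeff_tau_subst_Suc)
  then show ?thesis by (simp add: fun_eq_iff)
qed

end
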